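(* Let $\mathcal{SB}=\langle\mathcal{L},A,\to,\text{supp}\rangle$ be an SBAF and $S\subseteq Sent(A)$ a compatible set of sentences. Then for every $i\in\mathbb{N}$, $R^S_i(Init(S))\subseteq R^S_{i+1}(Init(S))$ and $R^S_{i+1}(Init(S))$ is admissible.
   Context: A language is a triple $\mathcal{L}=\langle L,\overline{\cdot},n\rangle$: $L$ is a nonempty set of sentences; $\overline{\cdot}$ assigns to each $s\in L$ a set $\overline{s}\subseteq L$ of sentences incompatible with $s$, and is symmetric; $n$ is a partial naming function assigning to an argument $a$ a sentence $n(a)\in L$ (if undefined, put $\overline{n(a)}:=\emptyset$), with $\overline{n(\langle\{t\},t\rangle)}=\emptyset$. An argument is a pair $a=\langle Prem(a),Conc(a)\rangle$ with $Prem(a)$ a nonempty finite subset of $L$ and $Conc(a)\in L$; $Sent(a):=Prem(a)\cup\{Conc(a)\}$, $Sent(E):=\bigcup_{a\in E}Sent(a)$. Argument $a$ attacks $b$ ($a\to b$) if $Conc(a)\in\overline{s}$ for some $s\in Sent(b)$ or $Conc(a)\in\overline{n(b)}$. An SBAF is $\langle\mathcal{L},A,\to,\text{supp}\rangle$ with $A$ a finite set of arguments. For $E\subseteq A$: $E$ defends $a\in A$ if for every $b\in A$ with $b\to a$ some element of $E$ attacks $b$; $E$ is conflict-free if no $a,b\in E$ with $a\to b$; admissible if conflict-free and defends all its elements. $S$ is compatible if no $s,t\in S$ with $s\in\overline t$. $Arg_s(S):=\{a\in A\mid Prem(a)\subseteq S\text{ and }\overline{n(a)}\cap S=\emptyset\}$;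 $R^S(E):=\{a\in A\mid a\in Arg_s(S)\text{ and }E\text{ defends }a\}$; $R^S_0(E):=E$, $R^S_{i+1}(E):=R^S(R^S_i(E))$. For compatible $S$, $Init(S)$ is the largest admissible subset of $\{a\in A\mid Sent(a)\subseteq S\text{ and }\overline{n(a)}\cap S=\emptyset\}$ (this exists and is unique). *)

theory Defs
  imports Main
begin

type_synonym 's arg = "'s set \<times> 's"

definition Prem :: "'s arg \<Rightarrow> 's set" where "Prem a = fst a"
definition Conc :: "'s arg \<Rightarrow> 's" where "Conc a = snd a"
definition Sent :: "'s arg \<Rightarrow> 's set" where "Sent a = Prem a \<union> {Conc a}"
definition SentE :: "'s arg set \<Rightarrow> 's set" where "SentE E = (\<Union>a\<in>E. Sent a)"

definition nameInc :: "('s \<Rightarrow> 's set) \<Rightarrow> ('s arg \<Rightarrow> 's option) \<Rightarrow> 's arg \<Rightarrow> 's set" where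
  "nameInc inc n a = (case n a of None \<Rightarrow> {} | Some s \<Rightarrow> inc s)"

definition language :: "'s set \<Rightarrow> ('s \<Rightarrow> 's set) \<Rightarrow> ('s arg \<Rightarrow> 's option) \<Rightarrow> bool" where
  "language L inc n \<longleftrightarrow> L \<noteq> {}
     \<and> (\<forall>s\<in>L. inc s \<subseteq> L)
     \<and> (\<forall>s\<in>L. \<forall>t\<in>L. s \<in> inc t \<longleftrightarrow> t \<in> inc s)
     \<and> (\<forall>a s. n a = Some s \<longrightarrow> s \<in> L)
     \<and> (\<forall>t. nameInc inc n ({t}, t) = {})"

definition is_argument :: "'s set \<Rightarrow> 's arg \<Rightarrow> bool" where
  "is_argument L a \<longleftrightarrow> Prem a \<noteq> {} \<and> finite (Prem a) \<and> Prem a \<subseteq> L \<and> Conc a \<in> L"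

definition attacks :: "('s \<Rightarrow> 's set) \<Rightarrow> ('s arg \<Rightarrow> 's option) \<Rightarrow> 's arg \<Rightarrow> 's arg \<Rightarrow> bool" where
  "attacks inc n a b \<longleftrightarrow> (\<exists>s\<in>Sent b. Conc a \<in> inc s) \<or> Conc a \<in> nameInc inc n b"

text \<open>An SBAF (the support relation plays no role in the statement).\<close>
definition SBAF :: "'s set \<Rightarrow> ('s \<Rightarrow> 's set) \<Rightarrow> ('s arg \<Rightarrow> 's option) \<Rightarrow> 's arg set \<Rightarrow> bool" where
  "SBAF L inc n A \<longleftrightarrow> language L inc n \<and> finite A \<and> (\<forall>a\<in>A. is_argument L a)"

definition defends :: "('s \<Rightarrow> 's set) \<Rightarrow> ('s arg \<Rightarrow> 's option) \<Rightarrow> 's arg set \<Rightarrow> 's arg set \<Rightarrow> 's arg \<Rightarrow> bool" where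
  "defends inc n A E a \<longleftrightarrow> (\<forall>b\<in>A. attacks inc n b a \<longrightarrow> (\<exists>c\<in>E. attacks inc n c b))"

definition conflict_free :: "('s \<Rightarrow> 's set) \<Rightarrow> ('s arg \<Rightarrow> 's option) \<Rightarrow> 's arg set \<Rightarrow> bool" where
  "conflict_free inc n E \<longleftrightarrow> (\<forall>a\<in>E. \<forall>b\<in>E. \<not> attacks inc n a b)"

definition admissible :: "('s \<Rightarrow> 's set) \<Rightarrow> ('s arg \<Rightarrow> 's option) \<Rightarrow> 's arg set \<Rightarrow> 's arg set \<Rightarrow> bool" where
  "admissible inc n A E \<longleftrightarrow> conflict_free inc n E \<and> (\<forall>a\<in>E. defends inc n A E a)"

definition compatible :: "('s \<Rightarrow> 's set) \<Rightarrow> 's set \<Rightarrow> bool" where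
  "compatible inc S \<longleftrightarrow> \<not> (\<exists>s\<in>S. \<exists>t\<in>S. s \<in> inc t)"

definition Arg_s :: "('s \<Rightarrow> 's set) \<Rightarrow> ('s arg \<Rightarrow> 's option) \<Rightarrow> 's arg set \<Rightarrow> 's set \<Rightarrow> 's arg set" where
  "Arg_s inc n A S = {a\<in>A. Prem a \<subseteq> S \<and> nameInc inc n a \<inter> S = {}}"

definition RS :: "('s \<Rightarrow> 's set) \<Rightarrow> ('s arg \<Rightarrow> 's option) \<Rightarrow> 's arg set \<Rightarrow> 's set \<Rightarrow> 's arg set \<Rightarrow> 's arg set" where
  "RS inc n A S E = {a\<in>A. a \<in> Arg_s inc n A S \<and> defends inc n A E a}"

definition RSi :: "('s \<Rightarrow> 's set) \<Rightarrow> ('s arg \<Rightarrow> 's option) \<Rightarrow> 's arg set \<Rightarrow> 's set \<Rightarrow> nat \<Rightarrow> 's arg set \<Rightarrow> 's arg set" where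
  "RSi inc n A S i E = (RS inc n A S ^^ i) E"

definition InitCand :: "('s \<Rightarrow> 's set) \<Rightarrow> ('s arg \<Rightarrow> 's option) \<Rightarrow> 's arg set \<Rightarrow> 's set \<Rightarrow> 's arg set" where
  "InitCand inc n A S = {a\<in>A. Sent a \<subseteq> S \<and> nameInc inc n a \<inter> S = {}}"

definition Init :: "('s \<Rightarrow> 's set) \<Rightarrow> ('s arg \<Rightarrow> 's option) \<Rightarrow> 's arg set \<Rightarrow> 's set \<Rightarrow> 's arg set" where
  "Init inc n A S = (THE E. E \<subseteq> InitCand inc n A S \<and> admissible inc n A E
       \<and> (\<forall>E'. E' \<subseteq> InitCand inc n A S \<and> admissible inc n A E' \<longrightarrow> E' \<subseteq> E))"

end

theory Submission
  imports Defs
begin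

text \<open>
  Since S is compatible, no argument built from S attacks another, so the admissible subsets
  of InitCand can be united: Init(S) is their union, and in particular admissible. An
  admissible set contained in Arg_s(S) defends its own elements, so Init(S) \<subseteq> R^S(Init(S));
  as R^S is monotone, iterating it yields an increasing chain. Finally R^S preserves
  admissibility of any E with E \<subseteq> R^S(E): if a attacks b inside R^S(E), the defence of b
  gives c \<in> E attacking a, and the defence of a gives d \<in> E attacking c, contradicting the
  conflict-freeness of E.
\<close>

lemma defends_mono: "defends inc n A E a \<Longrightarrow> E \<subseteq> E' \<Longrightarrow> defends inc n A E' a"
  unfolding defends_def by blast

lemma conflict_free_subset: "conflict_free inc n E' \<Longrightarrow> E \<subseteq> E' \<Longrightarrow> conflict_free inc n E"
  unfolding conflict_free_def by blast

lemma admissible_Union: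
  assumes "\<And>E. E \<in> F \<Longrightarrow> admissible inc n A E" and "conflict_free inc n (\<Union>F)"
  shows "admissible inc n A (\<Union>F)"
  using assms defends_mono[of inc n A _ _ "\<Union>F"] unfolding admissible_def by blast

lemma conflict_free_InitCand:
  "compatible inc S \<Longrightarrow> conflict_free inc n (InitCand inc n A S)"
  unfolding compatible_def conflict_free_def InitCand_def attacks_def Sent_def by blast

lemma admissible_Union_InitCand:
  assumes "compatible inc S"
  shows "admissible inc n A (\<Union>{E. E \<subseteq> InitCand inc n A S \<and> admissible inc n A E})"
proof (rule admissible_Union)
  show "conflict_free inc n (\<Union>{E. E \<subseteq> InitCand inc n A S \<and> admissible inc n A E})"
    by (rule conflict_free_subset[OF conflict_free_InitCand[OF assms]]) blast
qed blast

lemma Init_eq_Union: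
  assumes "compatible inc S"
  shows "Init inc n A S = \<Union>{E. E \<subseteq> InitCand inc n A S \<and> admissible inc n A E}"
  unfolding Init_def
  by (rule the_equality) (use admissible_Union_InitCand[OF assms] in blast)+

lemma Init_subset_InitCand: "compatible inc S \<Longrightarrow> Init inc n A S \<subseteq> InitCand inc n A S"
  by (auto simp: Init_eq_Union)

lemma admissible_Init: "compatible inc S \<Longrightarrow> admissible inc n A (Init inc n A S)"
  by (simp add: Init_eq_Union admissible_Union_InitCand)

lemma InitCand_subset_Arg_s: "InitCand inc n A S \<subseteq> Arg_s inc n A S"
  unfolding InitCand_def Arg_s_def Sent_def by blast

lemma subset_RS_if_admissible:
  assumes "admissible inc n A E" and "E \<subseteq> Arg_s inc n A S"
  shows "E \<subseteq> RS inc n A S E"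
  using assms unfolding admissible_def RS_def Arg_s_def by blast

lemma Init_subset_RS: "compatible inc S \<Longrightarrow> Init inc n A S \<subseteq> RS inc n A S (Init inc n A S)"
  using subset_RS_if_admissible admissible_Init Init_subset_InitCand InitCand_subset_Arg_s
  by (metis subset_trans)

lemma mono_RS: "mono (RS inc n A S)"
  unfolding mono_def RS_def using defends_mono by blast

lemma RSi_Suc: "RSi inc n A S (Suc i) E = RS inc n A S (RSi inc n A S i E)"
  unfolding RSi_def by simp

lemma RSi_subset_RSi_Suc:
  assumes "E \<subseteq> RS inc n A S E"
  shows "RSi inc n A S i E \<subseteq> RSi inc n A S (Suc i) E"
proof -
  have "(RS inc n A S ^^ i) E \<subseteq> (RS inc n A S ^^ i) (RS inc n A S E)"
    using funpow_mono[OF mono_RS assms] .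
  then show ?thesis
    unfolding RSi_def by (simp add: funpow_swap1)
qed

lemma admissible_RS:
  assumes adm: "admissible inc n A E" and sub: "E \<subseteq> RS inc n A S E"
  shows "admissible inc n A (RS inc n A S E)"
proof -
  have "conflict_free inc n (RS inc n A S E)"
    unfolding conflict_free_def
  proof (intro ballI notI)
    fix a b assume a: "a \<in> RS inc n A S E" and b: "b \<in> RS inc n A S E"
      and "attacks inc n a b"
    then obtain c where c: "c \<in> E" "attacks inc n c a"
      unfolding RS_def defends_def by blast
    moreover have "c \<in> A"
      using c(1) sub unfolding RS_def by blast
    ultimately obtain d where "d \<in> E" "attacks inc n d c"
      using a unfolding RS_def defends_def by blast
    with c(1) adm show False
      unfolding admissible_def conflict_free_def by blast
  qed
  moreover have "\<forall>a\<in>RS inc n A S E. defends inc n A (RS inc n A S E) a"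
    using sub defends_mono unfolding RS_def by blast
  ultimately show ?thesis
    unfolding admissible_def by blast
qed

lemma admissible_RSi:
  assumes "admissible inc n A E" and "E \<subseteq> RS inc n A S E"
  shows "admissible inc n A (RSi inc n A S i E)"
proof (induction i)
  case 0
  show ?case
    using assms(1) by (simp add: RSi_def)
next
  case (Suc i)
  have "RSi inc n A S i E \<subseteq> RS inc n A S (RSi inc n A S i E)"
    using RSi_subset_RSi_Suc[OF assms(2)] by (simp only: RSi_Suc)
  then show ?case
    using admissible_RS[OF Suc.IH] by (simp only: RSi_Suc)
qed

theorem mainTheorem6:
  fixes L :: "'s set" and inc :: "'s \<Rightarrow> 's set" and n :: "'s arg \<Rightarrow> 's option"
    and A :: "'s arg set" and S :: "'s set"
  assumes "SBAF L inc n A"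
    and "S \<subseteq> SentE A"
    and "compatible inc S"
  shows "\<forall>i::nat. RSi inc n A S i (Init inc n A S) \<subseteq> RSi inc n A S (Suc i) (Init inc n A S)
            \<and> admissible inc n A (RSi inc n A S (Suc i) (Init inc n A S))"
proof
  fix i :: nat
  have adm: "admissible inc n A (Init inc n A S)"
    using admissible_Init[OF assms(3)] .
  have sub: "Init inc n A S \<subseteq> RS inc n A S (Init inc n A S)"
    using Init_subset_RS[OF assms(3)] .
  show "RSi inc n A S i (Init inc n A S) \<subseteq> RSi inc n A S (Suc i) (Init inc n A S)
      \<and> admissible inc n A (RSi inc n A S (Suc i) (Init inc n A S))"
    using RSi_subset_RSi_Suc[OF sub] admissible_RSi[OF adm sub] by blast
qed

end
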